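(* Let $\mathcal{C}$ and $\mathcal{D}$ be classes of countable structures axiomatized by $\mathfrak{L}_{\omega_1\omega}$-sentences, regarded as categories whose morphisms are the embeddings between structures, and let $X_{\mathcal C}$, $X_{\mathcal D}$ be the corresponding standard Borel spaces of structures with universe $\mathbb{N}$ (with the logic action of $S_\infty$). Suppose $F:\mathcal{C}\to\mathcal{D}$ is a full embedding such that (i) $F$ maps objects with universe $\omega$ to objects with universe $\omega$, and (ii) there is a Borel function $f:X_{\mathcal C}\to X_{\mathcal D}$ with $f(x)\cong F(x)$ for every $x\in X_{\mathcal C}$. Then $\cong_{\mathcal C}\ \le_{\mathrm{SPB}}\ \cong_{\mathcal D}$, witnessed by $f$; in particular $\mathrm{Aut}(x)\cong\mathrm{Aut}(f(x))$ for every $x\in X_{\mathcal C}$.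
   Context: A full embedding of categories $F:\mathcal C\to\mathcal D$ is a functor that is injective on objects and such that for all objects $a,b$ the map $\mathrm{Hom}_{\mathcal C}(a,b)\to\mathrm{Hom}_{\mathcal D}(F(a),F(b))$, $h\mapsto F(h)$, is a bijection. For a Polish group $G$ with Borel actions on standard Borel spaces $X,Y$ with orbit equivalence relations $E_a,E_b$, $E_a\le_{\mathrm{SPB}}E_b$ (stabilizer-preserving Borel reduction) means there is a Borel $f:X\to Y$ with $x\,E_a\,y\iff f(x)\,E_b\,f(y)$ for all $x,y$, and such that the stabilizers $G_x$ and $G_{f(x)}$ are isomorphic groups for every $x\in X$. For $G=S_\infty$ acting on spaces of countable structures, this means $\mathrm{Aut}(x)\cong\mathrm{Aut}(f(x))$ for all $x$. $\cong_{\mathcal C}$ denotes isomorphism on $X_{\mathcal C}$. *)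

theory Defs
  imports "HOL-Analysis.Analysis" "HOL-Algebra.Group"
begin

type_synonym 'r struc = "nat set \<times> ('r \<Rightarrow> nat list set)"

definition wf_struc :: "('r \<Rightarrow> nat) \<Rightarrow> 'r struc \<Rightarrow> bool" where
  "wf_struc ar M \<longleftrightarrow> fst M \<noteq> {} \<and>
     (\<forall>r. \<forall>t\<in>snd M r. length t = ar r \<and> set t \<subseteq> fst M)"

datatype 'r fml =
    FRel 'r "nat list"
  | FEq nat nat
  | FNeg "'r fml"
  | FConj "nat \<Rightarrow> 'r fml"   \<comment> \<open>countable conjunction\<close>
  | FEx nat "'r fml"

primrec fv :: "'r fml \<Rightarrow> nat set" where
  "fv (FRel r vs) = set vs"
| "fv (FEq i j) = {i, j}"
| "fv (FNeg \<phi>) = fv \<phi>"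
| "fv (FConj \<phi>s) = \<Union> (range (fv \<circ> \<phi>s))"
| "fv (FEx i \<phi>) = fv \<phi> - {i}"

primrec wff :: "('r \<Rightarrow> nat) \<Rightarrow> 'r fml \<Rightarrow> bool" where
  "wff ar (FRel r vs) = (length vs = ar r)"
| "wff ar (FEq i j) = True"
| "wff ar (FNeg \<phi>) = wff ar \<phi>"
| "wff ar (FConj \<phi>s) = ((\<forall>n. wff ar (\<phi>s n)) \<and> finite (\<Union> (range (fv \<circ> \<phi>s))))"
| "wff ar (FEx i \<phi>) = wff ar \<phi>"

definition sentence :: "('r \<Rightarrow> nat) \<Rightarrow> 'r fml \<Rightarrow> bool" where
  "sentence ar \<phi> \<longleftrightarrow> wff ar \<phi> \<and> fv \<phi> = {}"

primrec sat :: "'r struc \<Rightarrow> (nat \<Rightarrow> nat) \<Rightarrow> 'r fml \<Rightarrow> bool" where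
  "sat M e (FRel r vs) = (map e vs \<in> snd M r)"
| "sat M e (FEq i j) = (e i = e j)"
| "sat M e (FNeg \<phi>) = (\<not> sat M e \<phi>)"
| "sat M e (FConj \<phi>s) = (\<forall>n. sat M e (\<phi>s n))"
| "sat M e (FEx i \<phi>) = (\<exists>a\<in>fst M. sat M (e(i := a)) \<phi>)"

definition models :: "'r struc \<Rightarrow> 'r fml \<Rightarrow> bool" where
  "models M \<phi> \<longleftrightarrow> (\<forall>e. (\<forall>i. e i \<in> fst M) \<longrightarrow> sat M e \<phi>)"

definition mod_class :: "('r \<Rightarrow> nat) \<Rightarrow> 'r fml \<Rightarrow> 'r struc set" where
  "mod_class ar \<sigma> = {M. wf_struc ar M \<and> models M \<sigma>}"

definition emb :: "'r struc \<Rightarrow> 'r struc \<Rightarrow> (nat \<Rightarrow> nat) \<Rightarrow> bool" where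
  "emb A B h \<longleftrightarrow> h \<in> extensional (fst A) \<and> h ` fst A \<subseteq> fst B \<and> inj_on h (fst A) \<and>
     (\<forall>r t. set t \<subseteq> fst A \<longrightarrow> (t \<in> snd A r \<longleftrightarrow> map h t \<in> snd B r))"

definition iso_struc :: "'r struc \<Rightarrow> 'r struc \<Rightarrow> bool" where
  "iso_struc A B \<longleftrightarrow> (\<exists>h. emb A B h \<and> h ` fst A = fst B)"

definition aut_group :: "'r struc \<Rightarrow> (nat \<Rightarrow> nat) monoid" where
  "aut_group M = \<lparr>carrier = {h. emb M M h \<and> h ` fst M = fst M},
                  mult = (\<lambda>g h. compose (fst M) g h),
                  one = restrict id (fst M)\<rparr>"

definition full_embedding ::
  "'r struc set \<Rightarrow> 's struc set \<Rightarrow> ('r struc \<Rightarrow> 's struc)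
   \<Rightarrow> ('r struc \<Rightarrow> 'r struc \<Rightarrow> (nat \<Rightarrow> nat) \<Rightarrow> (nat \<Rightarrow> nat)) \<Rightarrow> bool" where
  "full_embedding C D Fo Fm \<longleftrightarrow>
     (\<forall>a\<in>C. Fo a \<in> D) \<and>
     (\<forall>a\<in>C. \<forall>b\<in>C. \<forall>h. emb a b h \<longrightarrow> emb (Fo a) (Fo b) (Fm a b h)) \<and>
     (\<forall>a\<in>C. Fm a a (restrict id (fst a)) = restrict id (fst (Fo a))) \<and>
     (\<forall>a\<in>C. \<forall>b\<in>C. \<forall>c\<in>C. \<forall>h g. emb a b h \<and> emb b c g \<longrightarrow>
        Fm a c (compose (fst a) g h) = compose (fst (Fo a)) (Fm b c g) (Fm a b h)) \<and>
     inj_on Fo C \<and>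
     (\<forall>a\<in>C. \<forall>b\<in>C. bij_betw (Fm a b) {h. emb a b h} {k. emb (Fo a) (Fo b) k})"

definition structs_N :: "('r \<Rightarrow> nat) \<Rightarrow> 'r struc set" where
  "structs_N ar = {M. wf_struc ar M \<and> fst M = UNIV}"

text \<open>Borel structure generated by the basic sets "tuple t is in relation r"
  (= the product topology on the space of structures).\<close>
definition struc_borel :: "('r \<Rightarrow> nat) \<Rightarrow> 'r struc measure" where
  "struc_borel ar = sigma (structs_N ar)
      {{M \<in> structs_N ar. t \<in> snd M r} | r t. True}"

definition X_of :: "('r \<Rightarrow> nat) \<Rightarrow> 'r fml \<Rightarrow> 'r struc set" where
  "X_of ar \<sigma> = {M \<in> mod_class ar \<sigma>. fst M = UNIV}"

definition X_space :: "('r \<Rightarrow> nat) \<Rightarrow> 'r fml \<Rightarrow> 'r struc measure" where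
  "X_space ar \<sigma> = restrict_space (struc_borel ar) (X_of ar \<sigma>)"

text \<open>Stabilizer-preserving Borel reduction of isomorphism (orbit equivalence of the
  logic action of S_infinity) on X_C to that on X_D, via f; the stabilizer of x is Aut(x).\<close>
definition spb_reduction ::
  "('r \<Rightarrow> nat) \<Rightarrow> 'r fml \<Rightarrow> ('s \<Rightarrow> nat) \<Rightarrow> 's fml \<Rightarrow> ('r struc \<Rightarrow> 's struc) \<Rightarrow> bool" where
  "spb_reduction arC \<sigma> arD \<tau> f \<longleftrightarrow>
     f \<in> measurable (X_space arC \<sigma>) (X_space arD \<tau>) \<and>
     (\<forall>x\<in>X_of arC \<sigma>. \<forall>y\<in>X_of arC \<sigma>. iso_struc x y \<longleftrightarrow> iso_struc (f x) (f y)) \<and>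
     (\<forall>x\<in>X_of arC \<sigma>. aut_group x \<cong> aut_group (f x))"

end

theory Submission
  imports Defs
begin

text \<open>A full embedding F preserves isomorphisms (F h is inverted by F applied to the
  inverse of h) and, being full and faithful, also reflects them: if F h is onto, its inverse
  is F g for some g, and F (h \<circ> g) = F id forces h \<circ> g = id. For the same reason F restricts to a group isomorphism
  Aut(x) \<cong> Aut(F x). Since f x \<cong> F x, both statements transfer from F to f; the
  automorphism groups of isomorphic structures are conjugate.\<close>

definition struc_iso :: "'r struc \<Rightarrow> 'r struc \<Rightarrow> (nat \<Rightarrow> nat) \<Rightarrow> bool" where
  "struc_iso A B h \<longleftrightarrow> emb A B h \<and> h ` fst A = fst B"

lemma iso_struc_iff_struc_iso: "iso_struc A B \<longleftrightarrow> (\<exists>h. struc_iso A B h)"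
  by (simp add: iso_struc_def struc_iso_def)

lemma carrier_aut_group: "carrier (aut_group A) = {h. struc_iso A A h}"
  by (simp add: aut_group_def struc_iso_def)

lemma mult_aut_group: "a \<otimes>\<^bsub>aut_group A\<^esub> b = compose (fst A) a b"
  by (simp add: aut_group_def)

lemma compose_eq_restrict_id_iff:
  "compose S h g = restrict id S \<longleftrightarrow> (\<forall>w\<in>S. h (g w) = w)"
  by (auto simp: compose_def fun_eq_iff)

lemma emb_restrict_id: "emb A A (restrict id (fst A))"
proof -
  have "map (restrict id (fst A)) t = t" if "set t \<subseteq> fst A" for t
    using that by (intro map_idI) auto
  then show ?thesis unfolding emb_def by (auto simp: inj_on_def)
qed

lemma emb_compose:
  assumes h: "emb A B h" and g: "emb B C g"
  shows "emb A C (compose (fst A) g h)"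
  unfolding emb_def
proof (intro conjI allI)
  have hB: "h z \<in> fst B" if "z \<in> fst A" for z
    using h that by (auto simp: emb_def)
  show "compose (fst A) g h ` fst A \<subseteq> fst C"
    using g hB by (auto simp: emb_def compose_def)
  show "inj_on (compose (fst A) g h) (fst A)"
    using h g hB by (auto simp: emb_def compose_def inj_on_def)
  fix r t
  show "set t \<subseteq> fst A \<longrightarrow> (t \<in> snd A r \<longleftrightarrow> map (compose (fst A) g h) t \<in> snd C r)"
  proof
    assume t: "set t \<subseteq> fst A"
    have ht: "set (map h t) \<subseteq> fst B" using t hB by auto
    have "t \<in> snd A r \<longleftrightarrow> map h t \<in> snd B r" using h t by (simp add: emb_def)
    also have "\<dots> \<longleftrightarrow> map g (map h t) \<in> snd C r" using g ht by (simp only: emb_def)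
    also have "map g (map h t) = map (compose (fst A) g h) t"
      using t by (auto simp: compose_def)
    finally show "t \<in> snd A r \<longleftrightarrow> map (compose (fst A) g h) t \<in> snd C r" .
  qed
qed (rule compose_extensional)

lemma struc_iso_compose:
  "struc_iso A B h \<Longrightarrow> struc_iso B C g \<Longrightarrow> struc_iso A C (compose (fst A) g h)"
proof -
  assume "struc_iso A B h" "struc_iso B C g"
  then have "emb A B h" "emb B C g" "h ` fst A = fst B" "g ` fst B = fst C"
    by (simp_all add: struc_iso_def)
  moreover have "compose (fst A) g h ` fst A = g ` h ` fst A"
    by (auto simp: compose_def)
  ultimately show ?thesis by (simp add: struc_iso_def emb_compose)
qed

lemma struc_iso_if_right_inverse:
  assumes h: "emb A B h" and g: "emb B A g" and hg: "\<forall>w\<in>fst B. h (g w) = w"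
  shows "struc_iso A B h"
proof -
  have "fst B \<subseteq> h ` fst A"
  proof
    fix w assume "w \<in> fst B"
    then have "w = h (g w)" "g w \<in> fst A" using hg g by (auto simp: emb_def)
    then show "w \<in> h ` fst A" by blast
  qed
  with h show ?thesis by (auto simp: struc_iso_def emb_def)
qed

lemma struc_iso_inverse:
  assumes "struc_iso A B h"
  obtains g where "struc_iso B A g" "\<forall>z\<in>fst A. g (h z) = z" "\<forall>w\<in>fst B. h (g w) = w"
proof
  let ?g = "restrict (inv_into (fst A) h) (fst B)"
  have h: "emb A B h" and onto: "h ` fst A = fst B" and inj: "inj_on h (fst A)"
    using assms by (auto simp: struc_iso_def emb_def)
  show gh: "\<forall>z\<in>fst A. ?g (h z) = z" using inj onto by auto
  show hg: "\<forall>w\<in>fst B. h (?g w) = w" using onto by (auto simp: f_inv_into_f)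
  have gA: "?g w \<in> fst A" if "w \<in> fst B" for w
    using that onto by (auto intro: inv_into_into)
  have "emb B A ?g" unfolding emb_def
  proof (intro conjI allI impI)
    show "inj_on ?g (fst B)" using hg by (metis inj_onI)
    fix r t assume t: "set t \<subseteq> fst B"
    then have "map h (map ?g t) = t" using hg by (induction t) auto
    moreover have "set (map ?g t) \<subseteq> fst A" using t gA by auto
    ultimately show "t \<in> snd B r \<longleftrightarrow> map ?g t \<in> snd A r"
      using h by (metis emb_def)
  qed (use gA in auto)
  moreover have "?g ` fst B = fst A"
  proof
    show "fst A \<subseteq> ?g ` fst B"
    proof
      fix z assume "z \<in> fst A"
      then have "z = ?g (h z)" "h z \<in> fst B" using gh onto by auto
      then show "z \<in> ?g ` fst B" by (rule image_eqI)
    qed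
  qed (use gA in blast)
  ultimately show "struc_iso B A ?g" by (simp add: struc_iso_def)
qed

lemma iso_struc_sym: "iso_struc A B \<Longrightarrow> iso_struc B A"
  by (meson iso_struc_iff_struc_iso struc_iso_inverse)

lemma iso_struc_trans: "iso_struc A B \<Longrightarrow> iso_struc B C \<Longrightarrow> iso_struc A C"
  by (meson iso_struc_iff_struc_iso struc_iso_compose)

lemma iso_aut_groupI:
  assumes "bij_betw \<phi> (carrier (aut_group A)) (carrier (aut_group B))"
    and "\<And>a b. a \<in> carrier (aut_group A) \<Longrightarrow> b \<in> carrier (aut_group A) \<Longrightarrow>
           \<phi> (compose (fst A) a b) = compose (fst B) (\<phi> a) (\<phi> b)"
  shows "\<phi> \<in> iso (aut_group A) (aut_group B)"
  using assms by (auto simp: iso_def hom_def bij_betw_def mult_aut_group)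

definition conjugate :: "'r struc \<Rightarrow> (nat \<Rightarrow> nat) \<Rightarrow> (nat \<Rightarrow> nat) \<Rightarrow> (nat \<Rightarrow> nat) \<Rightarrow> nat \<Rightarrow> nat" where
  "conjugate B h g a = compose (fst B) h (compose (fst B) a g)"

lemma conjugate_in_aut_group:
  "struc_iso A B h \<Longrightarrow> struc_iso B A g \<Longrightarrow> a \<in> carrier (aut_group A) \<Longrightarrow>
    conjugate B h g a \<in> carrier (aut_group B)"
  unfolding conjugate_def carrier_aut_group by (auto intro!: struc_iso_compose)

lemma conjugate_conjugate:
  assumes a: "a \<in> carrier (aut_group A)" and gh: "\<forall>z\<in>fst A. g (h z) = z"
    and hB: "\<forall>z\<in>fst A. h z \<in> fst B"
  shows "conjugate A g h (conjugate B h g a) = a"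
proof
  fix z
  have "a z \<in> fst A" if "z \<in> fst A" using a that by (auto simp: carrier_aut_group struc_iso_def)
  moreover have "a \<in> extensional (fst A)" using a by (simp add: carrier_aut_group struc_iso_def emb_def)
  ultimately show "conjugate A g h (conjugate B h g a) z = a z"
    using gh hB by (cases "z \<in> fst A") (auto simp: conjugate_def compose_def extensional_def)
qed

lemma conjugate_compose:
  assumes "b \<in> carrier (aut_group A)" and gh: "\<forall>z\<in>fst A. g (h z) = z"
    and gA: "\<forall>w\<in>fst B. g w \<in> fst A" and hB: "\<forall>z\<in>fst A. h z \<in> fst B"
  shows "conjugate B h g (compose (fst A) a b) = compose (fst B) (conjugate B h g a) (conjugate B h g b)"
proof
  fix w
  have "b (g w) \<in> fst A" if "w \<in> fst B"
    using assms(1) gA that by (auto simp: carrier_aut_group struc_iso_def)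
  then show "conjugate B h g (compose (fst A) a b) w = compose (fst B) (conjugate B h g a) (conjugate B h g b) w"
    using gh gA hB by (simp add: conjugate_def compose_def)
qed

lemma iso_aut_group_conjugate:
  assumes h: "struc_iso A B h" and g: "struc_iso B A g"
    and gh: "\<forall>z\<in>fst A. g (h z) = z" and hg: "\<forall>w\<in>fst B. h (g w) = w"
  shows "conjugate B h g \<in> iso (aut_group A) (aut_group B)"
proof (rule iso_aut_groupI)
  have hB: "\<forall>z\<in>fst A. h z \<in> fst B" and gA: "\<forall>w\<in>fst B. g w \<in> fst A"
    using h g by (auto simp: struc_iso_def)
  show "bij_betw (conjugate B h g) (carrier (aut_group A)) (carrier (aut_group B))"
  proof (rule bij_betw_byWitness[where f' = "conjugate A g h"])
    show "\<forall>a\<in>carrier (aut_group A). conjugate A g h (conjugate B h g a) = a"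
      using conjugate_conjugate gh hB by blast
    show "\<forall>c\<in>carrier (aut_group B). conjugate B h g (conjugate A g h c) = c"
      using conjugate_conjugate hg gA by blast
    show "conjugate B h g ` carrier (aut_group A) \<subseteq> carrier (aut_group B)"
      using conjugate_in_aut_group h g by blast
    show "conjugate A g h ` carrier (aut_group B) \<subseteq> carrier (aut_group A)"
      using conjugate_in_aut_group h g by blast
  qed
  show "conjugate B h g (compose (fst A) a b) = compose (fst B) (conjugate B h g a) (conjugate B h g b)"
    if "b \<in> carrier (aut_group A)" for a b
    using conjugate_compose that gh gA hB .
qed

lemma iso_struc_imp_aut_group_iso: "iso_struc A B \<Longrightarrow> aut_group A \<cong> aut_group B"
proof -
  assume "iso_struc A B"
  then obtain h where h: "struc_iso A B h" by (auto simp: iso_struc_iff_struc_iso)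
  then obtain g where "struc_iso B A g" "\<forall>z\<in>fst A. g (h z) = z" "\<forall>w\<in>fst B. h (g w) = w"
    by (rule struc_iso_inverse)
  with h show ?thesis by (blast intro: is_isoI iso_aut_group_conjugate)
qed

context
  fixes C :: "'r struc set" and D :: "'s struc set"
    and Fo :: "'r struc \<Rightarrow> 's struc" and Fm :: "'r struc \<Rightarrow> 'r struc \<Rightarrow> (nat \<Rightarrow> nat) \<Rightarrow> nat \<Rightarrow> nat"
  assumes full: "full_embedding C D Fo Fm"
begin

lemma Fm_emb: "x \<in> C \<Longrightarrow> y \<in> C \<Longrightarrow> emb x y h \<Longrightarrow> emb (Fo x) (Fo y) (Fm x y h)"
  using full unfolding full_embedding_def by blast

lemma Fm_restrict_id: "x \<in> C \<Longrightarrow> Fm x x (restrict id (fst x)) = restrict id (fst (Fo x))"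
  using full unfolding full_embedding_def by blast

lemma Fm_compose:
  "x \<in> C \<Longrightarrow> y \<in> C \<Longrightarrow> z \<in> C \<Longrightarrow> emb x y h \<Longrightarrow> emb y z g \<Longrightarrow>
    Fm x z (compose (fst x) g h) = compose (fst (Fo x)) (Fm y z g) (Fm x y h)"
  using full unfolding full_embedding_def by blast

lemma bij_betw_Fm:
  "x \<in> C \<Longrightarrow> y \<in> C \<Longrightarrow> bij_betw (Fm x y) {h. emb x y h} {k. emb (Fo x) (Fo y) k}"
  using full unfolding full_embedding_def by blast

lemma Fm_struc_iso:
  assumes x: "x \<in> C" and y: "y \<in> C" and h: "struc_iso x y h"
  shows "struc_iso (Fo x) (Fo y) (Fm x y h)"
proof -
  obtain g where g: "struc_iso y x g" and hg: "\<forall>w\<in>fst y. h (g w) = w"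
    using h by (rule struc_iso_inverse)
  have h_emb: "emb x y h" and g_emb: "emb y x g"
    using h g by (simp_all add: struc_iso_def)
  have "compose (fst (Fo y)) (Fm x y h) (Fm y x g) = Fm y y (compose (fst y) h g)"
    using Fm_compose[OF y x y g_emb h_emb] by simp
  also have "\<dots> = restrict id (fst (Fo y))"
    using hg Fm_restrict_id[OF y] by (simp add: compose_eq_restrict_id_iff[THEN iffD2])
  finally have "\<forall>k\<in>fst (Fo y). Fm x y h (Fm y x g k) = k"
    by (simp add: compose_eq_restrict_id_iff)
  then show ?thesis
    using Fm_emb[OF x y h_emb] Fm_emb[OF y x g_emb] by (rule struc_iso_if_right_inverse[rotated 2])
qed

lemma struc_iso_if_Fm_struc_iso:
  assumes x: "x \<in> C" and y: "y \<in> C" and h: "emb x y h"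
    and Fh: "struc_iso (Fo x) (Fo y) (Fm x y h)"
  shows "struc_iso x y h"
proof -
  obtain k where k: "struc_iso (Fo y) (Fo x) k" and Fh_k: "\<forall>w\<in>fst (Fo y). Fm x y h (k w) = w"
    using Fh by (rule struc_iso_inverse)
  have "k \<in> Fm y x ` {g. emb y x g}"
    using bij_betw_Fm[OF y x] k by (simp add: bij_betw_def struc_iso_def)
  then obtain g where g: "emb y x g" and k_eq: "k = Fm y x g" by blast
  have "Fm y y (compose (fst y) h g) = compose (fst (Fo y)) (Fm x y h) k"
    using Fm_compose[OF y x y g h] k_eq by simp
  also have "\<dots> = Fm y y (restrict id (fst y))"
    using Fh_k Fm_restrict_id[OF y] by (simp add: compose_eq_restrict_id_iff[THEN iffD2])
  finally have "compose (fst y) h g = restrict id (fst y)"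
    using bij_betw_Fm[OF y y] emb_compose[OF g h] emb_restrict_id[of y]
    by (auto simp: bij_betw_def dest: inj_onD)
  then have "\<forall>w\<in>fst y. h (g w) = w" by (simp add: compose_eq_restrict_id_iff)
  with h g show ?thesis by (rule struc_iso_if_right_inverse)
qed

lemma iso_struc_Fo_iff:
  assumes x: "x \<in> C" and y: "y \<in> C"
  shows "iso_struc (Fo x) (Fo y) \<longleftrightarrow> iso_struc x y"
proof
  assume "iso_struc (Fo x) (Fo y)"
  then obtain k where k: "struc_iso (Fo x) (Fo y) k" by (auto simp: iso_struc_iff_struc_iso)
  then have "k \<in> Fm x y ` {h. emb x y h}"
    using bij_betw_Fm[OF x y] by (simp add: bij_betw_def struc_iso_def)
  then obtain h where "emb x y h" "k = Fm x y h" by blast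
  with k show "iso_struc x y"
    using struc_iso_if_Fm_struc_iso[OF x y] by (auto simp: iso_struc_iff_struc_iso)
qed (use Fm_struc_iso[OF x y] in \<open>auto simp: iso_struc_iff_struc_iso\<close>)

lemma Fm_iso_aut_group:
  assumes x: "x \<in> C"
  shows "Fm x x \<in> iso (aut_group x) (aut_group (Fo x))"
proof (rule iso_aut_groupI)
  have "Fm x x ` carrier (aut_group x) = carrier (aut_group (Fo x))"
  proof
    show "Fm x x ` carrier (aut_group x) \<subseteq> carrier (aut_group (Fo x))"
      using Fm_struc_iso[OF x x] by (auto simp: carrier_aut_group)
    show "carrier (aut_group (Fo x)) \<subseteq> Fm x x ` carrier (aut_group x)"
    proof
      fix k assume k: "k \<in> carrier (aut_group (Fo x))"
      then have "k \<in> Fm x x ` {h. emb x x h}"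
        using bij_betw_Fm[OF x x] by (simp add: bij_betw_def carrier_aut_group struc_iso_def)
      then obtain h where "emb x x h" "k = Fm x x h" by blast
      with k show "k \<in> Fm x x ` carrier (aut_group x)"
        using struc_iso_if_Fm_struc_iso[OF x x] by (auto simp: carrier_aut_group)
    qed
  qed
  then show "bij_betw (Fm x x) (carrier (aut_group x)) (carrier (aut_group (Fo x)))"
    using bij_betw_Fm[OF x x]
    by (rule bij_betw_subset[rotated 2]) (auto simp: carrier_aut_group struc_iso_def)
  show "Fm x x (compose (fst x) a b) = compose (fst (Fo x)) (Fm x x a) (Fm x x b)"
    if "a \<in> carrier (aut_group x)" "b \<in> carrier (aut_group x)" for a b
    using that Fm_compose[OF x x x] by (simp add: carrier_aut_group struc_iso_def)
qed

end

theorem proposition5p6: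
  fixes arC :: "'r::countable \<Rightarrow> nat" and arD :: "'s::countable \<Rightarrow> nat"
    and \<sigma> :: "'r fml" and \<tau> :: "'s fml"
    and Fo :: "'r struc \<Rightarrow> 's struc"
    and Fm :: "'r struc \<Rightarrow> 'r struc \<Rightarrow> (nat \<Rightarrow> nat) \<Rightarrow> (nat \<Rightarrow> nat)"
    and f :: "'r struc \<Rightarrow> 's struc"
  assumes "sentence arC \<sigma>" and "sentence arD \<tau>"
    and "full_embedding (mod_class arC \<sigma>) (mod_class arD \<tau>) Fo Fm"
    and "\<forall>x\<in>mod_class arC \<sigma>. fst x = UNIV \<longrightarrow> fst (Fo x) = UNIV"
    and "f \<in> measurable (X_space arC \<sigma>) (X_space arD \<tau>)"
    and "\<forall>x\<in>X_of arC \<sigma>. iso_struc (f x) (Fo x)"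
  shows "spb_reduction arC \<sigma> arD \<tau> f"
proof -
  note full = assms(3) and f_Fo = assms(6)
  have C: "x \<in> mod_class arC \<sigma>" if "x \<in> X_of arC \<sigma>" for x
    using that by (simp add: X_of_def)
  have "iso_struc x y \<longleftrightarrow> iso_struc (f x) (f y)" if "x \<in> X_of arC \<sigma>" "y \<in> X_of arC \<sigma>" for x y
  proof -
    have "iso_struc (f x) (Fo x)" "iso_struc (f y) (Fo y)" using f_Fo that by auto
    then have "iso_struc (f x) (f y) \<longleftrightarrow> iso_struc (Fo x) (Fo y)"
      by (meson iso_struc_sym iso_struc_trans)
    also have "\<dots> \<longleftrightarrow> iso_struc x y" using iso_struc_Fo_iff[OF full] C that by blast
    finally show ?thesis by simp
  qed
  moreover have "aut_group x \<cong> aut_group (f x)" if "x \<in> X_of arC \<sigma>" for x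
  proof -
    have "aut_group x \<cong> aut_group (Fo x)" using Fm_iso_aut_group[OF full C[OF that]] by (rule is_isoI)
    also have "aut_group (Fo x) \<cong> aut_group (f x)"
      using f_Fo that by (blast intro: iso_struc_imp_aut_group_iso iso_struc_sym)
    finally show ?thesis .
  qed
  ultimately show ?thesis using assms(5) by (simp add: spb_reduction_def)
qed

end
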